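(* Let $(G,S,C,\phi_0)$ be a minimal counterexample, and let $f=[uvw]$ be a $3$-face of $G$ with $d(u)=d(w)=3$ and $u,w\notin S$. Then every edge $e$ of $f$ is full, i.e., $C_e$ is a perfect matching.
   Context: All graphs are finite and simple. Two cycles are adjacent if they share at least one common edge. A $3$-correspondence assignment for $G$ consists of the list $L(u)=\{1,2,3\}$ for each vertex together with, for each edge $e=uv$, a matching $C_e$ (not necessarily perfect) between $\{u\}\times\{1,2,3\}$ and $\{v\}\times\{1,2,3\}$. A $C$-coloring is a map $\phi$ to $\{1,2,3\}$ with $(u,\phi(u))(v,\phi(v))\notin E(C_{uv})$ for every edge $uv$. For a closed walk $v_1\dots v_m$ ($v_m=v_1$), $C$ is inconsistent on it if there are colors $c_i$ with $(v_i,c_i)(v_{i+1},c_{i+1})\in E(C_{v_iv_{i+1}})$ for all $i\in[m-1]$ and $c_1\ne c_m$. A counterexample is a quadruple $(G,S,C,\phi_0)$ where $G$ is a plane graph with no two adjacent cycles of length at most $8$, $S\subseteq V(G)$ with $|S|\le 12$ is either a single vertex or the vertex set of the boundary of a face, $C$ is a $3$-correspondence assignment consistent on every closed walk of length $3$, and $\phi_0$ is a $C$-coloring of $G[S]$ that does not extend to a $C$-coloring of $G$. A minimal counterexample is a counterexample minimizing $|V(G)|$, subject to that minimizing $|E(G)|-|E(G[S])|$, and subject to both maximizing $\sum_{uv\in E(G)}|E(C_{uv})|$. A $k$-face is a face whose boundary has $k$ vertices; $[v_1\dots v_k]$ denotes the face with boundary vertices in this cyclic order. *)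

theory Defs
  imports "HOL-Analysis.Analysis"
begin

record pgraph =
  pV :: "nat set"
  pE :: "nat set set"
  pos :: "nat \<Rightarrow> complex"
  parc :: "nat set \<Rightarrow> real \<Rightarrow> complex"

definition plane_graph :: "pgraph \<Rightarrow> bool" where
  "plane_graph G \<longleftrightarrow>
     finite (pV G) \<and>
     (\<forall>e\<in>pE G. \<exists>u v. e = {u, v} \<and> u \<noteq> v \<and> u \<in> pV G \<and> v \<in> pV G) \<and>
     inj_on (pos G) (pV G) \<and>
     (\<forall>e\<in>pE G. arc (parc G e) \<and>
        (\<exists>u v. e = {u, v} \<and> pathstart (parc G e) = pos G u \<and> pathfinish (parc G e) = pos G v)) \<and>
     (\<forall>e\<in>pE G. \<forall>v\<in>pV G. pos G v \<in> path_image (parc G e) \<longrightarrow> v \<in> e) \<and>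
     (\<forall>e\<in>pE G. \<forall>e'\<in>pE G. e \<noteq> e' \<longrightarrow>
        path_image (parc G e) \<inter> path_image (parc G e') \<subseteq> pos G ` (e \<inter> e'))"

definition drawing :: "pgraph \<Rightarrow> complex set" where
  "drawing G = pos G ` pV G \<union> (\<Union>e\<in>pE G. path_image (parc G e))"

definition is_face :: "pgraph \<Rightarrow> complex set \<Rightarrow> bool" where
  "is_face G F \<longleftrightarrow> (\<exists>x. x \<notin> drawing G \<and> F = connected_component_set (- drawing G) x)"

definition face_vertices :: "pgraph \<Rightarrow> complex set \<Rightarrow> nat set" where
  "face_vertices G F = {v\<in>pV G. pos G v \<in> frontier F}"

definition face_edges :: "pgraph \<Rightarrow> complex set \<Rightarrow> nat set set" where
  "face_edges G F = {e\<in>pE G. path_image (parc G e) \<subseteq> frontier F}"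

definition degree :: "pgraph \<Rightarrow> nat \<Rightarrow> nat" where
  "degree G u = card {v. {u, v} \<in> pE G}"

definition is_cycle :: "pgraph \<Rightarrow> nat list \<Rightarrow> bool" where
  "is_cycle G xs \<longleftrightarrow> length xs \<ge> 3 \<and> distinct xs \<and> set xs \<subseteq> pV G \<and>
     (\<forall>i < length xs. {xs ! i, xs ! ((i + 1) mod length xs)} \<in> pE G)"

definition cycle_edges :: "nat list \<Rightarrow> nat set set" where
  "cycle_edges xs = {{xs ! i, xs ! ((i + 1) mod length xs)} | i. i < length xs}"

definition no_adjacent_short_cycles :: "pgraph \<Rightarrow> bool" where
  "no_adjacent_short_cycles G \<longleftrightarrow>
     (\<forall>xs ys. is_cycle G xs \<and> is_cycle G ys \<and> length xs \<le> 8 \<and> length ys \<le> 8 \<and>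
        cycle_edges xs \<noteq> cycle_edges ys \<longrightarrow> cycle_edges xs \<inter> cycle_edges ys = {})"

text \<open>C u v is the set of pairs (c,d) such that (u,c)(v,d) is an edge of the matching C_uv.\<close>
definition corr3 :: "pgraph \<Rightarrow> (nat \<Rightarrow> nat \<Rightarrow> (nat \<times> nat) set) \<Rightarrow> bool" where
  "corr3 G C \<longleftrightarrow>
     (\<forall>u v. {u, v} \<in> pE G \<longrightarrow>
        C u v \<subseteq> {1,2,3} \<times> {1,2,3} \<and> C v u = converse (C u v) \<and>
        (\<forall>a b b'. (a, b) \<in> C u v \<and> (a, b') \<in> C u v \<longrightarrow> b = b') \<and>
        (\<forall>a a' b. (a, b) \<in> C u v \<and> (a', b) \<in> C u v \<longrightarrow> a = a')) \<and>
     (\<forall>u v. {u, v} \<notin> pE G \<longrightarrow> C u v = {})"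

definition perfect_matching3 :: "(nat \<times> nat) set \<Rightarrow> bool" where
  "perfect_matching3 M \<longleftrightarrow>
     (\<forall>a\<in>{1,2,3}. \<exists>b. (a, b) \<in> M) \<and> (\<forall>b\<in>{1,2,3}. \<exists>a. (a, b) \<in> M)"

definition C_coloring :: "pgraph \<Rightarrow> (nat \<Rightarrow> nat \<Rightarrow> (nat \<times> nat) set) \<Rightarrow> nat set \<Rightarrow> (nat \<Rightarrow> nat) \<Rightarrow> bool" where
  "C_coloring G C X phi \<longleftrightarrow>
     (\<forall>v\<in>X. phi v \<in> {1,2,3}) \<and>
     (\<forall>u\<in>X. \<forall>v\<in>X. {u, v} \<in> pE G \<longrightarrow> (phi u, phi v) \<notin> C u v)"

definition closed_walk :: "pgraph \<Rightarrow> nat list \<Rightarrow> bool" where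
  "closed_walk G ws \<longleftrightarrow> length ws \<ge> 2 \<and> hd ws = last ws \<and>
     (\<forall>i < length ws - 1. {ws ! i, ws ! (i + 1)} \<in> pE G)"

definition inconsistent_on :: "(nat \<Rightarrow> nat \<Rightarrow> (nat \<times> nat) set) \<Rightarrow> nat list \<Rightarrow> bool" where
  "inconsistent_on C ws \<longleftrightarrow>
     (\<exists>cs. length cs = length ws \<and>
        (\<forall>i < length ws - 1. (cs ! i, cs ! (i + 1)) \<in> C (ws ! i) (ws ! (i + 1))) \<and>
        hd cs \<noteq> last cs)"

definition counterexample ::
  "pgraph \<Rightarrow> nat set \<Rightarrow> (nat \<Rightarrow> nat \<Rightarrow> (nat \<times> nat) set) \<Rightarrow> (nat \<Rightarrow> nat) \<Rightarrow> bool" where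
  "counterexample G S C phi0 \<longleftrightarrow>
     plane_graph G \<and> no_adjacent_short_cycles G \<and>
     S \<subseteq> pV G \<and> card S \<le> 12 \<and>
     ((\<exists>v\<in>pV G. S = {v}) \<or> (\<exists>F. is_face G F \<and> S = face_vertices G F)) \<and>
     corr3 G C \<and>
     (\<forall>ws. closed_walk G ws \<and> length ws = 4 \<longrightarrow> \<not> inconsistent_on C ws) \<and>
     C_coloring G C S phi0 \<and>
     \<not> (\<exists>phi. C_coloring G C (pV G) phi \<and> (\<forall>v\<in>S. phi v = phi0 v))"

definition excess_edges :: "pgraph \<Rightarrow> nat set \<Rightarrow> nat" where
  "excess_edges G S = card (pE G) - card {e\<in>pE G. e \<subseteq> S}"

text \<open>sum over the edges uv of |E(C_uv)| (each edge counted once, via u < v).\<close>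
definition corr_weight :: "pgraph \<Rightarrow> (nat \<Rightarrow> nat \<Rightarrow> (nat \<times> nat) set) \<Rightarrow> nat" where
  "corr_weight G C = (\<Sum>p\<in>{(u, v). {u, v} \<in> pE G \<and> u < v}. card (C (fst p) (snd p)))"

definition minimal_counterexample ::
  "pgraph \<Rightarrow> nat set \<Rightarrow> (nat \<Rightarrow> nat \<Rightarrow> (nat \<times> nat) set) \<Rightarrow> (nat \<Rightarrow> nat) \<Rightarrow> bool" where
  "minimal_counterexample G S C phi0 \<longleftrightarrow>
     counterexample G S C phi0 \<and>
     (\<forall>G' S' C' phi0'. counterexample G' S' C' phi0' \<longrightarrow>
        \<not> (card (pV G') < card (pV G) \<or>
           (card (pV G') = card (pV G) \<and>
             (excess_edges G' S' < excess_edges G S \<or>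
              (excess_edges G' S' = excess_edges G S \<and> corr_weight G' C' > corr_weight G C)))))"

end

theory Submission
  imports Defs
begin

(*
  Suppose an edge of the triangle uvw is not full. Since C is consistent on the triangle, its
  three matchings can be extended to perfect matchings C'_ab = {(i, j). sigma_a i = sigma_b j}
  given by permutations sigma_u, sigma_v, sigma_w; replacing C by C' on the triangle keeps every
  closed walk of length 3 consistent, because no other triangle shares an edge with uvw, and
  strictly increases the total weight. It remains to see that a C'-coloring phi still does not
  extend phi0. At u the colors forbidden by C are at most one from the neighbor outside the
  triangle (d(u) = 3) and at most one from v, and likewise at w. If some free colors p at u and
  q at w satisfy (p, q) not in C_uw, recoloring u and w gives a C-coloring extending phi0.
  Otherwise the free colors form a product inside the matching C_uw, which forces v to forbid a
  color at both u and w; the permutations then show that phi u and phi w are free as well, so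
  (phi u, phi w) lies in C_uw and hence in C'_uw, contradicting that phi is a C'-coloring.
*)

section \<open>Triangles in plane graphs\<close>

lemma plane_graph_edge:
  assumes "plane_graph G" "{a, b} \<in> pE G"
  shows "a \<noteq> b" "a \<in> pV G" "b \<in> pV G"
proof -
  have "\<forall>e\<in>pE G. \<exists>x y. e = {x, y} \<and> x \<noteq> y \<and> x \<in> pV G \<and> y \<in> pV G"
    using assms(1) unfolding plane_graph_def by (elim conjE)
  then obtain x y where "{a, b} = {x, y}" "x \<noteq> y" "x \<in> pV G" "y \<in> pV G"
    using assms(2) by blast
  then show "a \<noteq> b" "a \<in> pV G" "b \<in> pV G"
    by (auto simp: doubleton_eq_iff)
qed

lemma cycle_edges_triangle: "cycle_edges [a, b, c] = {{a, b}, {b, c}, {c, a}}"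
proof -
  have "cycle_edges [a, b, c] = (\<lambda>i. {[a, b, c] ! i, [a, b, c] ! ((i + 1) mod 3)}) ` {i. i < 3}"
    unfolding cycle_edges_def by auto
  also have "{i. i < (3::nat)} = {0, 1, 2}" by auto
  finally show ?thesis by simp
qed

lemma is_cycle_triangle:
  assumes "plane_graph G" "distinct [a, b, c]"
    and "{a, b} \<in> pE G" "{b, c} \<in> pE G" "{c, a} \<in> pE G"
  shows "is_cycle G [a, b, c]"
  unfolding is_cycle_def
proof (intro conjI allI impI)
  show "set [a, b, c] \<subseteq> pV G"
    using plane_graph_edge[OF assms(1)] assms(3,4) by auto
  fix i assume "i < length [a, b, c]"
  then consider "i = 0" | "i = 1" | "i = 2" by fastforce
  then show "{[a, b, c] ! i, [a, b, c] ! ((i + 1) mod length [a, b, c])} \<in> pE G"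
    by cases (use assms(3-5) in simp_all)
qed (use assms(2) in simp_all)

lemma triangle_apex_unique:
  assumes "plane_graph G" "no_adjacent_short_cycles G" "distinct [a, b, c]"
    and "{a, b} \<in> pE G" "{b, c} \<in> pE G" "{c, a} \<in> pE G"
    and "{b, z} \<in> pE G" "{z, a} \<in> pE G" "z \<notin> {a, b}"
  shows "z = c"
proof -
  have "distinct [a, b, z]" using assms(3,9) by auto
  then have cycles: "is_cycle G [a, b, c]" "is_cycle G [a, b, z]"
    using is_cycle_triangle assms by blast+
  have "cycle_edges [a, b, c] = cycle_edges [a, b, z]"
  proof (rule ccontr)
    assume "cycle_edges [a, b, c] \<noteq> cycle_edges [a, b, z]"
    then have "cycle_edges [a, b, c] \<inter> cycle_edges [a, b, z] = {}"
      using assms(2) cycles unfolding no_adjacent_short_cycles_def by auto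
    then show False by (simp add: cycle_edges_triangle)
  qed
  then have "{b, z} \<in> {{a, b}, {b, c}, {c, a}}"
    by (simp only: cycle_edges_triangle) blast
  then consider "{b, z} = {a, b}" | "{b, z} = {b, c}" | "{b, z} = {c, a}"
    by blast
  then show ?thesis
    by cases (use assms(3,9) in \<open>auto simp: doubleton_eq_iff\<close>)
qed

lemma degree_3_third_neighbor_unique:
  assumes "degree G x = 3" "{x, a} \<in> pE G" "{x, b} \<in> pE G" "a \<noteq> b"
    and "{x, z} \<in> pE G" "{x, z'} \<in> pE G" "z \<notin> {a, b}" "z' \<notin> {a, b}"
  shows "z = z'"
proof -
  define N where "N = {y. {x, y} \<in> pE G}"
  have "card N = 3" using assms(1) unfolding N_def degree_def .
  moreover have "{a, b} \<subseteq> N" using assms(2,3) unfolding N_def by simp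
  moreover have "finite {a, b}" by simp
  ultimately have "card (N - {a, b}) = 1"
    using assms(4) card_Diff_subset[of "{a, b}" N] by simp
  then obtain t where "N - {a, b} = {t}" by (rule card_1_singletonE)
  moreover have "z \<in> N - {a, b}" "z' \<in> N - {a, b}"
    using assms(5-8) unfolding N_def by simp_all
  ultimately show ?thesis by simp
qed

section \<open>Consistency on triangles\<close>

definition consistent_on_triangles ::
  "pgraph \<Rightarrow> (nat \<Rightarrow> nat \<Rightarrow> (nat \<times> nat) set) \<Rightarrow> bool" where
  "consistent_on_triangles G C \<longleftrightarrow>
     (\<forall>ws. closed_walk G ws \<and> length ws = 4 \<longrightarrow> \<not> inconsistent_on C ws)"

lemma closed_walk_length_4_iff:
  "closed_walk G ws \<and> length ws = 4 \<longleftrightarrow>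
     (\<exists>a b c. ws = [a, b, c, a] \<and> {a, b} \<in> pE G \<and> {b, c} \<in> pE G \<and> {c, a} \<in> pE G)"
proof
  assume walk: "closed_walk G ws \<and> length ws = 4"
  then obtain a b c d where "ws = [a, b, c, d]"
    by (auto simp: length_Suc_conv numeral_eq_Suc)
  with walk show "\<exists>a b c. ws = [a, b, c, a] \<and> {a, b} \<in> pE G \<and> {b, c} \<in> pE G \<and> {c, a} \<in> pE G"
    unfolding closed_walk_def by (auto simp: All_less_Suc2 numeral_eq_Suc)
qed (elim exE conjE, simp add: closed_walk_def All_less_Suc2 numeral_eq_Suc)

lemma inconsistent_on_triangle_iff:
  "inconsistent_on C [a, b, c, a] \<longleftrightarrow>
     (\<exists>x0 x1 x2 x3. (x0, x1) \<in> C a b \<and> (x1, x2) \<in> C b c \<and> (x2, x3) \<in> C c a \<and> x0 \<noteq> x3)"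
proof
  assume "inconsistent_on C [a, b, c, a]"
  then obtain cs where "length cs = length [a, b, c, a]"
    and "\<forall>i < length [a, b, c, a] - 1. (cs ! i, cs ! (i + 1)) \<in> C ([a, b, c, a] ! i) ([a, b, c, a] ! (i + 1))"
    and "hd cs \<noteq> last cs"
    unfolding inconsistent_on_def by blast
  moreover from \<open>length cs = length [a, b, c, a]\<close> obtain x0 x1 x2 x3 where "cs = [x0, x1, x2, x3]"
    by (auto simp: length_Suc_conv numeral_eq_Suc)
  ultimately show "\<exists>x0 x1 x2 x3. (x0, x1) \<in> C a b \<and> (x1, x2) \<in> C b c \<and> (x2, x3) \<in> C c a \<and> x0 \<noteq> x3"
    by (auto simp: All_less_Suc2 numeral_eq_Suc)
next
  assume "\<exists>x0 x1 x2 x3. (x0, x1) \<in> C a b \<and> (x1, x2) \<in> C b c \<and> (x2, x3) \<in> C c a \<and> x0 \<noteq> x3"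
  then obtain x0 x1 x2 x3 where "(x0, x1) \<in> C a b" "(x1, x2) \<in> C b c" "(x2, x3) \<in> C c a" "x0 \<noteq> x3"
    by blast
  then show "inconsistent_on C [a, b, c, a]"
    unfolding inconsistent_on_def
    by (intro exI[of _ "[x0, x1, x2, x3]"]) (auto simp: All_less_Suc2 numeral_eq_Suc)
qed

lemma consistent_on_trianglesI:
  assumes "\<And>a b c x0 x1 x2 x3. {a, b} \<in> pE G \<Longrightarrow> {b, c} \<in> pE G \<Longrightarrow> {c, a} \<in> pE G \<Longrightarrow>
    (x0, x1) \<in> C a b \<Longrightarrow> (x1, x2) \<in> C b c \<Longrightarrow> (x2, x3) \<in> C c a \<Longrightarrow> x0 = x3"
  shows "consistent_on_triangles G C"
  unfolding consistent_on_triangles_def closed_walk_length_4_iff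
  using assms by (auto simp: inconsistent_on_triangle_iff)

lemma consistent_on_trianglesD:
  assumes "consistent_on_triangles G C" "{a, b} \<in> pE G" "{b, c} \<in> pE G" "{c, a} \<in> pE G"
    and "(x0, x1) \<in> C a b" "(x1, x2) \<in> C b c" "(x2, x3) \<in> C c a"
  shows "x0 = x3"
proof -
  have "\<not> inconsistent_on C [a, b, c, a]"
    using assms(1-4) unfolding consistent_on_triangles_def closed_walk_length_4_iff by blast
  then show ?thesis
    using assms(5-7) unfolding inconsistent_on_triangle_iff by blast
qed

section \<open>Correspondence assignments\<close>

lemma corr3_edge:
  assumes "corr3 G C" "{a, b} \<in> pE G"
  shows corr3_subset: "C a b \<subseteq> {1, 2, 3} \<times> {1, 2, 3}"
    and corr3_converse: "C b a = (C a b)\<inverse>"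
    and corr3_single_valued_edge: "single_valued (C a b)"
    and corr3_single_valued_converse_edge: "single_valued ((C a b)\<inverse>)"
proof -
  note edge = assms(1)[unfolded corr3_def, THEN conjunct1, rule_format, OF assms(2)]
  show "C a b \<subseteq> {1, 2, 3} \<times> {1, 2, 3}" by (rule conjunct1[OF edge])
  show "C b a = (C a b)\<inverse>" by (rule conjunct1[OF conjunct2[OF edge]])
  show "single_valued (C a b)"
    using conjunct1[OF conjunct2[OF conjunct2[OF edge]]] by (auto simp: single_valued_def)
  show "single_valued ((C a b)\<inverse>)"
    using conjunct2[OF conjunct2[OF conjunct2[OF edge]]] by (auto simp: single_valued_def)
qed

lemma corr3_nonedge:
  assumes "corr3 G C" "{a, b} \<notin> pE G"
  shows "C a b = {}"
  by (rule assms(1)[unfolded corr3_def, THEN conjunct2, rule_format, OF assms(2)])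

lemma corr3_single_valued: "corr3 G C \<Longrightarrow> single_valued (C a b)"
  by (cases "{a, b} \<in> pE G") (simp_all add: corr3_single_valued_edge corr3_nonedge)

lemma corr3_single_valued_converse: "corr3 G C \<Longrightarrow> single_valued ((C a b)\<inverse>)"
  by (cases "{a, b} \<in> pE G") (simp_all add: corr3_single_valued_converse_edge corr3_nonedge)

lemma corr3I:
  assumes "\<And>a b. {a, b} \<in> pE G \<Longrightarrow> C a b \<subseteq> {1, 2, 3} \<times> {1, 2, 3}"
    and "\<And>a b. {a, b} \<in> pE G \<Longrightarrow> C b a = (C a b)\<inverse>"
    and "\<And>a b. single_valued (C a b)" "\<And>a b. single_valued ((C a b)\<inverse>)"
    and "\<And>a b. {a, b} \<notin> pE G \<Longrightarrow> C a b = {}"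
  shows "corr3 G C"
  unfolding corr3_def
proof (rule conjI; intro allI impI)
  fix a b assume edge: "{a, b} \<in> pE G"
  have "\<forall>x y y'. (x, y) \<in> C a b \<and> (x, y') \<in> C a b \<longrightarrow> y = y'"
    using assms(3)[of a b] unfolding single_valued_def by blast
  moreover have "\<forall>x x' y. (x, y) \<in> C a b \<and> (x', y) \<in> C a b \<longrightarrow> x = x'"
    using assms(4)[of a b] unfolding single_valued_def by blast
  ultimately show "C a b \<subseteq> {1, 2, 3} \<times> {1, 2, 3} \<and> C b a = (C a b)\<inverse> \<and>
      (\<forall>x y y'. (x, y) \<in> C a b \<and> (x, y') \<in> C a b \<longrightarrow> y = y') \<and>
      (\<forall>x x' y. (x, y) \<in> C a b \<and> (x', y) \<in> C a b \<longrightarrow> x = x')"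
    using assms(1,2)[OF edge] by (intro conjI)
next
  fix a b assume "{a, b} \<notin> pE G"
  then show "C a b = {}" by (rule assms(5))
qed

lemma card_Domain_single_valued: "single_valued M \<Longrightarrow> card (Domain M) = card M"
  unfolding Domain_fst by (rule card_image) (auto simp: inj_on_def single_valued_def)

lemma perfect_matching3_iff:
  "perfect_matching3 M \<longleftrightarrow> {1, 2, 3} \<subseteq> Domain M \<and> {1, 2, 3} \<subseteq> Range M"
  unfolding perfect_matching3_def subset_iff Domain_iff Range_iff by blast

lemma corr3_card_le_3:
  assumes "corr3 G C"
  shows "card (C a b) \<le> 3"
proof (cases "{a, b} \<in> pE G")
  case True
  then have "Domain (C a b) \<subseteq> {1, 2, 3}" using corr3_subset[OF assms] by blast
  then have "card (Domain (C a b)) \<le> card {1, 2, 3 :: nat}" by (rule card_mono[rotated]) simp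
  then show ?thesis using card_Domain_single_valued[OF corr3_single_valued[OF assms]] by simp
qed (simp add: corr3_nonedge[OF assms])

lemma card_less_3_if_proper_subset:
  assumes "A \<subseteq> {1, 2, 3 :: nat}" "\<not> {1, 2, 3} \<subseteq> A"
  shows "card A < 3"
proof -
  have "A \<subset> {1, 2, 3}" using assms by blast
  then have "card A < card {1, 2, 3 :: nat}" by (rule psubset_card_mono[rotated]) simp
  then show ?thesis by simp
qed

lemma corr3_card_less_3_if_not_perfect:
  assumes "corr3 G C" "\<not> perfect_matching3 (C a b)"
  shows "card (C a b) < 3"
proof (cases "{a, b} \<in> pE G")
  case True
  have sub: "Domain (C a b) \<subseteq> {1, 2, 3}" "Range (C a b) \<subseteq> {1, 2, 3}"
    using corr3_subset[OF assms(1) True] by blast+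
  have "card (Domain (C a b)) = card (C a b)"
    by (rule card_Domain_single_valued[OF corr3_single_valued[OF assms(1)]])
  moreover have "card (Range (C a b)) = card (C a b)"
    using card_Domain_single_valued[OF corr3_single_valued_converse[OF assms(1)]] by simp
  moreover have "\<not> {1, 2, 3} \<subseteq> Domain (C a b) \<or> \<not> {1, 2, 3} \<subseteq> Range (C a b)"
    using assms(2) unfolding perfect_matching3_iff by blast
  ultimately show ?thesis
    using card_less_3_if_proper_subset sub by metis
qed (simp add: corr3_nonedge[OF assms(1)])

lemma single_valued_Image_subsingleton:
  assumes "single_valued M"
  obtains c where "{p. (y, p) \<in> M} \<subseteq> {c}"
proof (cases "\<exists>p. (y, p) \<in> M")
  case True
  then obtain c where "(y, c) \<in> M" by blast
  then have "{p. (y, p) \<in> M} \<subseteq> {c}" using single_valuedD[OF assms] by blast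
  then show ?thesis by (rule that)
qed (use that in blast)

lemma single_valued_extends_to_bij_betw:
  fixes R :: "('a \<times> 'a) set"
  assumes "finite K" "R \<subseteq> K \<times> K" "single_valued R" "single_valued (R\<inverse>)"
  obtains f where "bij_betw f K K" "\<And>a b. (a, b) \<in> R \<Longrightarrow> f a = b"
proof -
  define r where "r a = (THE b. (a, b) \<in> R)" for a
  have r: "r a = b" if "(a, b) \<in> R" for a b
    unfolding r_def
    by (rule the_equality) (use that single_valuedD[OF assms(3) that] in blast)+
  have "inj_on r (Domain R)"
  proof (rule inj_onI)
    fix a a' assume "a \<in> Domain R" "a' \<in> Domain R" "r a = r a'"
    then have "(r a, a) \<in> R\<inverse>" "(r a, a') \<in> R\<inverse>" using r by auto
    then show "a = a'" by (rule single_valuedD[OF assms(4)])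
  qed
  moreover have "r ` Domain R = Range R"
    using r by (auto intro!: image_eqI)
  ultimately have bij_R: "bij_betw r (Domain R) (Range R)"
    unfolding bij_betw_def by blast
  have sub: "Domain R \<subseteq> K" "Range R \<subseteq> K" using assms(2) by auto
  then have "card (K - Domain R) = card (K - Range R)"
    using assms(1) bij_betw_same_card[OF bij_R] by (simp add: card_Diff_subset finite_subset)
  then obtain g where bij_rest: "bij_betw g (K - Domain R) (K - Range R)"
    using finite_same_card_bij[of "K - Domain R" "K - Range R"] assms(1) by blast
  define f where "f a = (if a \<in> Domain R then r a else g a)" for a
  have "bij_betw f (Domain R) (Range R)"
    using bij_R by (rule bij_betw_cong[THEN iffD1, rotated]) (simp add: f_def)
  moreover have "bij_betw f (K - Domain R) (K - Range R)"
    using bij_rest by (rule bij_betw_cong[THEN iffD1, rotated]) (simp add: f_def)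
  ultimately have "bij_betw f (Domain R \<union> (K - Domain R)) (Range R \<union> (K - Range R))"
    by (rule bij_betw_combine) blast
  moreover have "Domain R \<union> (K - Domain R) = K" "Range R \<union> (K - Range R) = K"
    using sub by auto
  ultimately have "bij_betw f K K" by simp
  moreover have "f a = b" if "(a, b) \<in> R" for a b
    using that r by (auto simp: f_def)
  ultimately show ?thesis using that by blast
qed

lemma single_valued_converse_relabel:
  assumes "single_valued M" "single_valued (M\<inverse>)" "inj_on \<gamma> (Domain M)"
  shows "single_valued ((\<lambda>(p, b). (b, \<gamma> p)) ` M)" "single_valued (((\<lambda>(p, b). (b, \<gamma> p)) ` M)\<inverse>)"
proof -
  show "single_valued ((\<lambda>(p, b). (b, \<gamma> p)) ` M)"
  proof (rule single_valuedI)
    fix b c c' assume "(b, c) \<in> (\<lambda>(p, b). (b, \<gamma> p)) ` M" "(b, c') \<in> (\<lambda>(p, b). (b, \<gamma> p)) ` M"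
    then obtain p p' where "(p, b) \<in> M" "(p', b) \<in> M" "c = \<gamma> p" "c' = \<gamma> p'" by auto
    moreover from this have "p = p'" using single_valuedD[OF assms(2)] by blast
    ultimately show "c = c'" by simp
  qed
  show "single_valued (((\<lambda>(p, b). (b, \<gamma> p)) ` M)\<inverse>)"
  proof (rule single_valuedI)
    fix c b b' assume "(c, b) \<in> ((\<lambda>(p, b). (b, \<gamma> p)) ` M)\<inverse>" "(c, b') \<in> ((\<lambda>(p, b). (b, \<gamma> p)) ` M)\<inverse>"
    then obtain p p' where "(p, b) \<in> M" "(p', b') \<in> M" "\<gamma> p = \<gamma> p'" by auto
    moreover from this have "p = p'" using inj_onD[OF assms(3)] by blast
    ultimately show "b = b'" using single_valuedD[OF assms(1)] by blast
  qed
qed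

lemma consistent_triangle_single_valued:
  assumes "corr3 G C" "consistent_on_triangles G C"
    and "{u, v} \<in> pE G" "{v, w} \<in> pE G" "{w, u} \<in> pE G"
  shows "single_valued (C u w \<union> C u v O C v w)" "single_valued ((C u w \<union> C u v O C v w)\<inverse>)"
proof -
  note sv = corr3_single_valued[OF assms(1)] corr3_single_valued_converse[OF assms(1)]
  have "{u, w} \<in> pE G" using assms(5) by (simp add: insert_commute)
  note converse_uw = corr3_converse[OF assms(1) this]
  show "single_valued (C u w \<union> C u v O C v w)"
  proof (rule single_valuedI)
    fix p q q' assume "(p, q) \<in> C u w \<union> C u v O C v w" "(p, q') \<in> C u w \<union> C u v O C v w"
    moreover have "q = q'" if "(p, q) \<in> C u w" "(p, b) \<in> C u v" "(b, q') \<in> C v w" for q q' b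
      using consistent_on_trianglesD[OF assms(2,5,3,4), of q p b q'] that converse_uw by simp
    ultimately show "q = q'"
      using single_valuedD[OF sv(1)[of u w]] single_valuedD[OF single_valued_relcomp[OF sv(1)[of u v] sv(1)[of v w]]]
      by blast
  qed
  show "single_valued ((C u w \<union> C u v O C v w)\<inverse>)"
  proof (rule single_valuedI)
    fix q p p' assume "(q, p) \<in> (C u w \<union> C u v O C v w)\<inverse>" "(q, p') \<in> (C u w \<union> C u v O C v w)\<inverse>"
    moreover have "p = p'" if "(p', q) \<in> C u w" "(p, b) \<in> C u v" "(b, q) \<in> C v w" for p p' q b
      using consistent_on_trianglesD[OF assms(2,3,4,5), of p b q p'] that converse_uw by simp
    ultimately show "p = p'"
      using single_valuedD[OF sv(2)[of u w]] single_valuedD[OF single_valued_relcomp[OF sv(2)[of v w] sv(2)[of u v]]]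
      by blast
  qed
qed

lemma triangle_potential:
  assumes "corr3 G C" "consistent_on_triangles G C" "distinct [u, v, w]"
    and "{u, v} \<in> pE G" "{v, w} \<in> pE G" "{w, u} \<in> pE G"
  obtains \<sigma> :: "nat \<Rightarrow> nat \<Rightarrow> nat"
  where "\<And>a. bij_betw (\<sigma> a) {1, 2, 3} {1, 2, 3}"
    and "\<And>p b q. (p, b) \<in> C u v \<Longrightarrow> (b, q) \<in> C v w \<Longrightarrow> \<sigma> u p = \<sigma> v b \<and> \<sigma> v b = \<sigma> w q"
    and "\<And>p q. (p, q) \<in> C u w \<Longrightarrow> \<sigma> u p = \<sigma> w q"
proof -
  have finite: "finite {1, 2, 3 :: nat}" by simp
  have uw: "{u, w} \<in> pE G" using assms(6) by (simp add: insert_commute)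
  \<comment> \<open>\<open>\<gamma>\<close> extends \<open>C u w\<close> and the paths through v; \<open>\<delta>\<close> transports \<open>\<gamma>\<close> along \<open>C u v\<close>.\<close>
  define R where "R = C u w \<union> C u v O C v w"
  have "R \<subseteq> {1, 2, 3} \<times> {1, 2, 3}"
    unfolding R_def using corr3_subset[OF assms(1)] assms(4,5) uw by blast
  moreover have "single_valued R" "single_valued (R\<inverse>)"
    unfolding R_def by (rule consistent_triangle_single_valued[OF assms(1,2,4-6)])+
  ultimately obtain \<gamma> where \<gamma>: "bij_betw \<gamma> {1, 2, 3} {1, 2, 3}" "\<And>p q. (p, q) \<in> R \<Longrightarrow> \<gamma> p = q"
    using single_valued_extends_to_bij_betw[OF finite] by blast
  define R' where "R' = (\<lambda>(p, b). (b, \<gamma> p)) ` C u v"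
  have "R' \<subseteq> {1, 2, 3} \<times> {1, 2, 3}"
  proof
    fix x assume "x \<in> R'"
    then obtain p b where "(p, b) \<in> C u v" "x = (b, \<gamma> p)" unfolding R'_def by auto
    then show "x \<in> {1, 2, 3} \<times> {1, 2, 3}"
      using corr3_subset[OF assms(1,4)] bij_betwE[OF \<gamma>(1)] by blast
  qed
  moreover have "Domain (C u v) \<subseteq> {1, 2, 3}" using corr3_subset[OF assms(1,4)] by blast
  then have "inj_on \<gamma> (Domain (C u v))"
    by (rule inj_on_subset[OF bij_betw_imp_inj_on[OF \<gamma>(1)]])
  then have "single_valued R'" "single_valued (R'\<inverse>)"
    unfolding R'_def
    by (rule single_valued_converse_relabel[OF corr3_single_valued[OF assms(1)]
        corr3_single_valued_converse[OF assms(1)]])+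
  ultimately obtain \<delta> where \<delta>: "bij_betw \<delta> {1, 2, 3} {1, 2, 3}" "\<And>b c. (b, c) \<in> R' \<Longrightarrow> \<delta> b = c"
    using single_valued_extends_to_bij_betw[OF finite] by blast
  define \<sigma> :: "nat \<Rightarrow> nat \<Rightarrow> nat" where "\<sigma> a = (if a = u then \<gamma> else if a = v then \<delta> else id)" for a
  show ?thesis
  proof (rule that[of \<sigma>])
    show "bij_betw (\<sigma> a) {1, 2, 3} {1, 2, 3}" for a
      unfolding \<sigma>_def using \<gamma>(1) \<delta>(1) by simp
    show "\<sigma> u p = \<sigma> v b \<and> \<sigma> v b = \<sigma> w q" if "(p, b) \<in> C u v" "(b, q) \<in> C v w" for p b q
    proof -
      have "(p, q) \<in> R" unfolding R_def using that by blast
      moreover have "(b, \<gamma> p) \<in> R'" unfolding R'_def using that(1) by (rule rev_image_eqI) simp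
      ultimately show ?thesis using \<gamma>(2) \<delta>(2) assms(3) unfolding \<sigma>_def by auto
    qed
    show "\<sigma> u p = \<sigma> w q" if "(p, q) \<in> C u w" for p q
      using that \<gamma>(2) assms(3) unfolding \<sigma>_def R_def by auto
  qed
qed

lemma color_avoiding_two:
  obtains c where "c \<in> {1, 2, 3 :: nat}" "c \<noteq> x" "c \<noteq> y"
proof -
  define c :: nat where "c = (if 1 \<notin> {x, y} then 1 else if 2 \<notin> {x, y} then 2 else 3)"
  have "c \<in> {1, 2, 3}" "c \<noteq> x" "c \<noteq> y" unfolding c_def by auto
  then show ?thesis by (rule that)
qed

lemma product_not_in_matching:
  assumes "X \<subseteq> {x}" "B \<noteq> {}" "single_valued (M\<inverse>)"
  shows "\<not> ({1, 2, 3 :: nat} - X) \<times> B \<subseteq> M"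
proof
  assume product: "({1, 2, 3} - X) \<times> B \<subseteq> M"
  obtain c1 where c1: "c1 \<in> {1, 2, 3}" "c1 \<noteq> x" by (rule color_avoiding_two)
  obtain c2 where c2: "c2 \<in> {1, 2, 3}" "c2 \<noteq> x" "c2 \<noteq> c1" by (rule color_avoiding_two)
  obtain b where "b \<in> B" using assms(2) by blast
  then have "(b, c1) \<in> M\<inverse>" "(b, c2) \<in> M\<inverse>"
    using product c1 c2 assms(1) by auto
  then show False
    using single_valuedD[OF assms(3)] c2(3) by blast
qed

lemma C_coloring_update_two:
  assumes "plane_graph G" "corr3 G C" "u \<noteq> w"
    and colors: "\<And>a. a \<in> pV G \<Longrightarrow> \<phi> a \<in> {1, 2, 3}" "p \<in> {1, 2, 3}" "q \<in> {1, 2, 3}"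
    and away: "\<And>a b. {a, b} \<in> pE G \<Longrightarrow> a \<notin> {u, w} \<Longrightarrow> b \<notin> {u, w} \<Longrightarrow> (\<phi> a, \<phi> b) \<notin> C a b"
    and at_u: "\<And>z. {u, z} \<in> pE G \<Longrightarrow> z \<noteq> w \<Longrightarrow> (\<phi> z, p) \<notin> C z u"
    and at_w: "\<And>z. {w, z} \<in> pE G \<Longrightarrow> z \<noteq> u \<Longrightarrow> (\<phi> z, q) \<notin> C z w"
    and uw: "(p, q) \<notin> C u w"
  shows "C_coloring G C (pV G) (\<phi>(u := p, w := q))"
  unfolding C_coloring_def
proof (intro conjI ballI impI)
  show "(\<phi>(u := p, w := q)) a \<in> {1, 2, 3}" if "a \<in> pV G" for a
    using colors that by simp
  fix a b assume "a \<in> pV G" "b \<in> pV G" and ab: "{a, b} \<in> pE G"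
  have "a \<noteq> b" using plane_graph_edge[OF assms(1) ab] by simp
  have ba: "{b, a} \<in> pE G" using ab by (simp add: insert_commute)
  have converse: "C a b = (C b a)\<inverse>" by (rule corr3_converse[OF assms(2) ba])
  consider "a \<notin> {u, w}" "b \<notin> {u, w}" | "a \<in> {u, w}" "b \<in> {u, w}"
    | "a \<in> {u, w}" "b \<notin> {u, w}" | "a \<notin> {u, w}" "b \<in> {u, w}"
    by blast
  then show "((\<phi>(u := p, w := q)) a, (\<phi>(u := p, w := q)) b) \<notin> C a b"
  proof cases
    case 1
    then show ?thesis using away[OF ab] by simp
  next
    case 2
    then show ?thesis using uw \<open>a \<noteq> b\<close> converse assms(3) by auto
  next
    case 3
    then show ?thesis using at_u[of b] at_w[of b] ab converse by auto
  next
    case 4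
    then show ?thesis using at_u[of a] at_w[of a] ba by auto
  qed
qed

section \<open>Completing the correspondence on a triangle\<close>

locale triangle_completion =
  fixes G :: pgraph and S :: "nat set" and C :: "nat \<Rightarrow> nat \<Rightarrow> (nat \<times> nat) set"
    and phi0 :: "nat \<Rightarrow> nat" and u v w :: nat and \<sigma> :: "nat \<Rightarrow> nat \<Rightarrow> nat"
  assumes counterexample: "counterexample G S C phi0"
    and distinct: "distinct [u, v, w]"
    and edge_uv: "{u, v} \<in> pE G" and edge_vw: "{v, w} \<in> pE G" and edge_wu: "{w, u} \<in> pE G"
    and degree_u: "degree G u = 3" and degree_w: "degree G w = 3"
    and u_notin_S: "u \<notin> S" and w_notin_S: "w \<notin> S"
    and bij_\<sigma>: "\<And>a. a \<in> {u, v, w} \<Longrightarrow> bij_betw (\<sigma> a) {1, 2, 3} {1, 2, 3}"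
    and \<sigma>_path: "\<And>p b q. (p, b) \<in> C u v \<Longrightarrow> (b, q) \<in> C v w \<Longrightarrow> \<sigma> u p = \<sigma> v b \<and> \<sigma> v b = \<sigma> w q"
    and \<sigma>_uw: "\<And>p q. (p, q) \<in> C u w \<Longrightarrow> \<sigma> u p = \<sigma> w q"
begin

lemma plane: "plane_graph G"
  and no_short: "no_adjacent_short_cycles G"
  and corr: "corr3 G C"
  and consistent: "consistent_on_triangles G C"
  and coloring_S: "C_coloring G C S phi0"
  and no_extension: "\<not> (\<exists>\<phi>. C_coloring G C (pV G) \<phi> \<and> (\<forall>x\<in>S. \<phi> x = phi0 x))"
  using counterexample unfolding counterexample_def consistent_on_triangles_def by blast+

lemma edge_inside:
  assumes "a \<in> {u, v, w}" "b \<in> {u, v, w}" "a \<noteq> b"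
  shows "{a, b} \<in> pE G"
proof -
  have "{v, u} \<in> pE G" "{w, v} \<in> pE G" "{u, w} \<in> pE G"
    using edge_uv edge_vw edge_wu by (simp_all add: insert_commute)
  with assms edge_uv edge_vw edge_wu show ?thesis by fastforce
qed

lemma \<sigma>_in: "a \<in> {u, v, w} \<Longrightarrow> i \<in> {1, 2, 3} \<Longrightarrow> \<sigma> a i \<in> {1, 2, 3}"
  using bij_betwE[OF bij_\<sigma>] by blast

lemma \<sigma>_inj: "a \<in> {u, v, w} \<Longrightarrow> i \<in> {1, 2, 3} \<Longrightarrow> j \<in> {1, 2, 3} \<Longrightarrow> \<sigma> a i = \<sigma> a j \<Longrightarrow> i = j"
  using inj_onD[OF bij_betw_imp_inj_on[OF bij_\<sigma>]] by blast

lemma \<sigma>_surj: "a \<in> {u, v, w} \<Longrightarrow> k \<in> {1, 2, 3} \<Longrightarrow> \<exists>i\<in>{1, 2, 3}. \<sigma> a i = k"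
  using bij_betw_imp_surj_on[OF bij_\<sigma>] by (metis imageE)

lemma \<sigma>_through_v:
  assumes "(b, p) \<in> C v u" "(b, q) \<in> C v w"
  shows "\<sigma> u p = \<sigma> v b" "\<sigma> w q = \<sigma> v b"
proof -
  have "(p, b) \<in> C u v" using assms(1) corr3_converse[OF corr edge_uv] by simp
  then show "\<sigma> u p = \<sigma> v b" "\<sigma> w q = \<sigma> v b" using \<sigma>_path assms(2) by auto
qed

definition completion :: "nat \<Rightarrow> nat \<Rightarrow> (nat \<times> nat) set" where
  "completion a b = (if a \<in> {u, v, w} \<and> b \<in> {u, v, w} \<and> a \<noteq> b
     then {(i, j). i \<in> {1, 2, 3} \<and> j \<in> {1, 2, 3} \<and> \<sigma> a i = \<sigma> b j} else C a b)"

lemma completion_inside: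
  assumes "a \<in> {u, v, w} \<and> b \<in> {u, v, w} \<and> a \<noteq> b"
  shows "completion a b = {(i, j). i \<in> {1, 2, 3} \<and> j \<in> {1, 2, 3} \<and> \<sigma> a i = \<sigma> b j}"
  unfolding completion_def using assms by (rule if_P)

lemma completion_outside:
  assumes "\<not> (a \<in> {u, v, w} \<and> b \<in> {u, v, w} \<and> a \<noteq> b)"
  shows "completion a b = C a b"
  unfolding completion_def using assms by (rule if_not_P)

lemma single_valued_completion: "single_valued (completion a b)"
proof (cases "a \<in> {u, v, w} \<and> b \<in> {u, v, w} \<and> a \<noteq> b")
  case True
  show ?thesis
  proof (rule single_valuedI)
    fix i j j' assume "(i, j) \<in> completion a b" "(i, j') \<in> completion a b"
    then have "j \<in> {1, 2, 3}" "j' \<in> {1, 2, 3}" "\<sigma> a i = \<sigma> b j" "\<sigma> a i = \<sigma> b j'"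
      unfolding completion_inside[OF True] by blast+
    then show "j = j'" using \<sigma>_inj[of b j j'] True by simp
  qed
next
  case False
  show ?thesis unfolding completion_outside[OF False] by (rule corr3_single_valued[OF corr])
qed

lemma completion_converse: "completion b a = (completion a b)\<inverse>"
proof (cases "a \<in> {u, v, w} \<and> b \<in> {u, v, w} \<and> a \<noteq> b")
  case True
  then have swapped: "b \<in> {u, v, w} \<and> a \<in> {u, v, w} \<and> b \<noteq> a" by blast
  show ?thesis
    unfolding completion_inside[OF True] completion_inside[OF swapped] by (auto simp: eq_commute)
next
  case False
  then have outside: "completion a b = C a b" "completion b a = C b a"
    by (intro completion_outside; blast)+
  show ?thesis
  proof (cases "{a, b} \<in> pE G")
    case True
    then show ?thesis unfolding outside by (rule corr3_converse[OF corr])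
  next
    case False
    moreover have "{b, a} \<notin> pE G" using False by (simp add: insert_commute)
    ultimately show ?thesis unfolding outside using corr3_nonedge[OF corr] by simp
  qed
qed

lemma corr3_completion: "corr3 G completion"
proof (rule corr3I)
  show "completion a b \<subseteq> {1, 2, 3} \<times> {1, 2, 3}" if "{a, b} \<in> pE G" for a b
  proof (cases "a \<in> {u, v, w} \<and> b \<in> {u, v, w} \<and> a \<noteq> b")
    case True
    show ?thesis unfolding completion_inside[OF True] by blast
  next
    case False
    show ?thesis unfolding completion_outside[OF False] by (rule corr3_subset[OF corr that])
  qed
  show "completion b a = (completion a b)\<inverse>" for a b
    by (rule completion_converse)
  show "single_valued (completion a b)" for a b
    by (rule single_valued_completion)
  show "single_valued ((completion a b)\<inverse>)" for a b
    unfolding completion_converse[symmetric] by (rule single_valued_completion)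
  show "completion a b = {}" if "{a, b} \<notin> pE G" for a b
  proof -
    have outside: "\<not> (a \<in> {u, v, w} \<and> b \<in> {u, v, w} \<and> a \<noteq> b)" using that edge_inside by blast
    show ?thesis unfolding completion_outside[OF outside] by (rule corr3_nonedge[OF corr that])
  qed
qed

lemma triangle_closed:
  assumes "a \<in> {u, v, w}" "b \<in> {u, v, w}" "a \<noteq> b" "{a, z} \<in> pE G" "{b, z} \<in> pE G"
  shows "z \<in> {u, v, w}"
proof -
  obtain c where c: "c \<in> {u, v, w}" "c \<noteq> a" "c \<noteq> b"
    using assms(1-3) distinct by auto
  have "z \<notin> {a, b}"
    using plane_graph_edge(1)[OF plane assms(4)] plane_graph_edge(1)[OF plane assms(5)] by auto
  moreover have "{z, a} \<in> pE G" using assms(4) by (simp add: insert_commute)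
  ultimately have "z = c"
    using triangle_apex_unique[OF plane no_short _ edge_inside[OF assms(1-3)] _ _ assms(5)]
      edge_inside c assms(1-3) by (simp add: insert_commute)
  then show ?thesis using c(1) by simp
qed

lemma consistent_completion: "consistent_on_triangles G completion"
proof (rule consistent_on_trianglesI)
  fix a b c x0 x1 x2 x3
  assume edges: "{a, b} \<in> pE G" "{b, c} \<in> pE G" "{c, a} \<in> pE G"
    and steps: "(x0, x1) \<in> completion a b" "(x1, x2) \<in> completion b c" "(x2, x3) \<in> completion c a"
  have distinct_abc: "a \<noteq> b" "b \<noteq> c" "c \<noteq> a"
    using plane_graph_edge(1)[OF plane] edges by blast+
  show "x0 = x3"
  proof (cases "a \<in> {u, v, w} \<and> b \<in> {u, v, w} \<and> c \<in> {u, v, w}")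
    case True
    then have "x0 \<in> {1, 2, 3}" "x3 \<in> {1, 2, 3}" "\<sigma> a x0 = \<sigma> a x3"
      using steps distinct_abc by (auto simp: completion_inside)
    then show ?thesis using \<sigma>_inj True by blast
  next
    case False
    have "{c, b} \<in> pE G" "{a, c} \<in> pE G" "{b, a} \<in> pE G"
      using edges by (simp_all add: insert_commute)
    then have "\<not> (x \<in> {u, v, w} \<and> y \<in> {u, v, w} \<and> x \<noteq> y)"
      if "(x, y) \<in> {(a, b), (b, c), (c, a)}" for x y
      using that False triangle_closed edges by blast
    then have "(x0, x1) \<in> C a b" "(x1, x2) \<in> C b c" "(x2, x3) \<in> C c a"
      using steps completion_outside by auto
    then show ?thesis by (rule consistent_on_trianglesD[OF consistent edges])
  qed
qed

lemma coloring_S_completion: "C_coloring G completion S phi0"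
proof -
  have "completion a b = C a b" if "a \<in> S" "b \<in> S" for a b
    using that u_notin_S w_notin_S by (intro completion_outside) blast
  then show ?thesis using coloring_S unfolding C_coloring_def by simp
qed

lemma card_completion_inside:
  assumes "a \<in> {u, v, w} \<and> b \<in> {u, v, w} \<and> a \<noteq> b"
  shows "card (completion a b) = 3"
proof -
  have "Domain (completion a b) = {1, 2, 3}"
  proof
    show "Domain (completion a b) \<subseteq> {1, 2, 3}" unfolding completion_inside[OF assms] by blast
    show "{1, 2, 3} \<subseteq> Domain (completion a b)"
    proof
      fix i :: nat assume i: "i \<in> {1, 2, 3}"
      then obtain j where "j \<in> {1, 2, 3}" "\<sigma> b j = \<sigma> a i"
        using \<sigma>_surj \<sigma>_in assms by meson
      then show "i \<in> Domain (completion a b)" unfolding completion_inside[OF assms] using i by auto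
    qed
  qed
  then show ?thesis
    using card_Domain_single_valued[OF single_valued_completion[of a b]] by simp
qed

lemma corr_weight_less:
  assumes "x \<in> {u, v, w}" "y \<in> {u, v, w}" "x \<noteq> y" "\<not> perfect_matching3 (C x y)"
  shows "corr_weight G C < corr_weight G completion"
proof -
  define P where "P = {(a, b). {a, b} \<in> pE G \<and> a < b}"
  have "finite (pV G)" using plane unfolding plane_graph_def by (elim conjE)
  moreover have "P \<subseteq> pV G \<times> pV G" unfolding P_def using plane_graph_edge(2,3)[OF plane] by auto
  ultimately have "finite P" by (meson finite_SigmaI finite_subset)
  moreover have "card (C a b) \<le> card (completion a b)" for a b
    using corr3_card_le_3[OF corr] card_completion_inside completion_outside
    by (cases "a \<in> {u, v, w} \<and> b \<in> {u, v, w} \<and> a \<noteq> b") auto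
  moreover have "\<exists>p\<in>P. card (C (fst p) (snd p)) < card (completion (fst p) (snd p))"
  proof -
    have "\<not> perfect_matching3 (C y x)"
      using assms(4) corr3_converse[OF corr edge_inside[OF assms(1-3)]] by (simp add: perfect_matching3_iff conj_commute)
    then have "card (C x y) < card (completion x y)" "card (C y x) < card (completion y x)"
      using corr3_card_less_3_if_not_perfect[OF corr] assms card_completion_inside by auto
    moreover have "(x, y) \<in> P \<or> (y, x) \<in> P"
      unfolding P_def using edge_inside[OF assms(1-3)] assms(3) by (auto simp: insert_commute)
    ultimately show ?thesis by force
  qed
  ultimately have "(\<Sum>p\<in>P. card (C (fst p) (snd p))) < (\<Sum>p\<in>P. card (completion (fst p) (snd p)))"
    by (intro sum_strict_mono_ex1) auto
  then show ?thesis unfolding corr_weight_def P_def .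
qed

definition outer_forbidden :: "(nat \<Rightarrow> nat) \<Rightarrow> nat \<Rightarrow> nat set" where
  "outer_forbidden \<phi> x = {p. \<exists>z. {x, z} \<in> pE G \<and> z \<notin> {u, v, w} \<and> (\<phi> z, p) \<in> C z x}"

definition v_forbidden :: "(nat \<Rightarrow> nat) \<Rightarrow> nat \<Rightarrow> nat set" where
  "v_forbidden \<phi> x = {p. (\<phi> v, p) \<in> C v x}"

definition free_colors :: "(nat \<Rightarrow> nat) \<Rightarrow> nat \<Rightarrow> nat set" where
  "free_colors \<phi> x = {1, 2, 3} - (outer_forbidden \<phi> x \<union> v_forbidden \<phi> x)"

lemma outer_neighbor_unique:
  assumes "x \<in> {u, w}" "{x, z} \<in> pE G" "z \<notin> {u, v, w}" "{x, z'} \<in> pE G" "z' \<notin> {u, v, w}"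
  shows "z = z'"
  using assms(1)
proof
  assume "x = u"
  then show ?thesis
    using degree_3_third_neighbor_unique[OF degree_u edge_uv, of w z z'] edge_wu distinct assms(2-5)
    by (simp add: insert_commute)
next
  assume "x \<in> {w}"
  then show ?thesis
    using degree_3_third_neighbor_unique[OF degree_w _ edge_wu, of v z z'] edge_vw distinct assms(2-5)
    by (simp add: insert_commute)
qed

lemma outer_forbidden_subsingleton:
  assumes "x \<in> {u, w}"
  obtains c where "outer_forbidden \<phi> x \<subseteq> {c}"
proof (cases "\<exists>z. {x, z} \<in> pE G \<and> z \<notin> {u, v, w}")
  case True
  then obtain z where z: "{x, z} \<in> pE G" "z \<notin> {u, v, w}" by blast
  obtain c where "{p. (\<phi> z, p) \<in> C z x} \<subseteq> {c}"
    using single_valued_Image_subsingleton[OF corr3_single_valued[OF corr]] by blast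
  moreover have "outer_forbidden \<phi> x \<subseteq> {p. (\<phi> z, p) \<in> C z x}"
    unfolding outer_forbidden_def using outer_neighbor_unique[OF assms z] by blast
  ultimately show ?thesis using that by blast
next
  case False
  then have "outer_forbidden \<phi> x = {}" unfolding outer_forbidden_def by blast
  then show ?thesis using that by blast
qed

lemma free_colors_nonempty:
  assumes "x \<in> {u, w}"
  shows "free_colors \<phi> x \<noteq> {}"
proof -
  obtain c where c: "outer_forbidden \<phi> x \<subseteq> {c}" using outer_forbidden_subsingleton[OF assms] .
  obtain c' where c': "v_forbidden \<phi> x \<subseteq> {c'}"
    unfolding v_forbidden_def using single_valued_Image_subsingleton[OF corr3_single_valued[OF corr]] .
  obtain k where "k \<in> {1, 2, 3}" "k \<noteq> c" "k \<noteq> c'" by (rule color_avoiding_two)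
  then have "k \<in> free_colors \<phi> x" unfolding free_colors_def using c c' by blast
  then show ?thesis by blast
qed

context
  fixes \<phi> :: "nat \<Rightarrow> nat"
  assumes coloring: "C_coloring G completion (pV G) \<phi>"
begin

lemma coloring_in: "a \<in> pV G \<Longrightarrow> \<phi> a \<in> {1, 2, 3}"
  using coloring unfolding C_coloring_def by blast

lemma coloring_edge: "{a, b} \<in> pE G \<Longrightarrow> (\<phi> a, \<phi> b) \<notin> completion a b"
  using coloring plane_graph_edge(2,3)[OF plane] unfolding C_coloring_def by blast

lemma coloring_uvw_in: "x \<in> {u, v, w} \<Longrightarrow> \<phi> x \<in> {1, 2, 3}"
  using coloring_in plane_graph_edge(2,3)[OF plane edge_uv] plane_graph_edge(2)[OF plane edge_wu]
  by blast

lemma coloring_avoids_outer_forbidden: "\<phi> x \<notin> outer_forbidden \<phi> x"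
proof
  assume "\<phi> x \<in> outer_forbidden \<phi> x"
  then obtain z where z: "{x, z} \<in> pE G" "z \<notin> {u, v, w}" "(\<phi> z, \<phi> x) \<in> C z x"
    unfolding outer_forbidden_def by blast
  have "{z, x} \<in> pE G" using z(1) by (simp add: insert_commute)
  moreover have "completion z x = C z x" using z(2) by (intro completion_outside) blast
  ultimately show False using coloring_edge z(3) by metis
qed

lemma coloring_avoids_v_forbidden:
  assumes "x \<in> {u, w}" "y \<in> {u, w}" "x \<noteq> y" "v_forbidden \<phi> y \<noteq> {}"
  shows "\<phi> x \<notin> v_forbidden \<phi> x"
proof
  assume "\<phi> x \<in> v_forbidden \<phi> x"
  moreover obtain q where "q \<in> v_forbidden \<phi> y" using assms(4) by blast
  ultimately have "\<sigma> x (\<phi> x) = \<sigma> v (\<phi> v)"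
    using assms(1-3) \<sigma>_through_v unfolding v_forbidden_def by auto
  moreover have "v \<in> {u, v, w} \<and> x \<in> {u, v, w} \<and> v \<noteq> x" using assms(1) distinct by auto
  ultimately have "(\<phi> v, \<phi> x) \<in> completion v x"
    using coloring_uvw_in assms(1) by (auto simp: completion_inside)
  moreover have "{v, x} \<in> pE G" using assms(1) edge_vw edge_uv by (auto simp: insert_commute)
  ultimately show False using coloring_edge by blast
qed

lemma free_colors_product_not_in_C_uw: "\<not> free_colors \<phi> u \<times> free_colors \<phi> w \<subseteq> C u w"
proof
  assume product: "free_colors \<phi> u \<times> free_colors \<phi> w \<subseteq> C u w"
  have "v_forbidden \<phi> u \<noteq> {}"
  proof
    assume "v_forbidden \<phi> u = {}"
    moreover obtain c where "outer_forbidden \<phi> u \<subseteq> {c}"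
      using outer_forbidden_subsingleton[of u \<phi>] by blast
    ultimately show False
      using product_not_in_matching[OF _ free_colors_nonempty corr3_single_valued_converse[OF corr], of _ c]
        product unfolding free_colors_def by simp
  qed
  moreover have "v_forbidden \<phi> w \<noteq> {}"
  proof
    assume "v_forbidden \<phi> w = {}"
    moreover obtain c where "outer_forbidden \<phi> w \<subseteq> {c}"
      using outer_forbidden_subsingleton[of w \<phi>] by blast
    moreover have "single_valued (((C u w)\<inverse>)\<inverse>)" using corr3_single_valued[OF corr] by simp
    moreover have "free_colors \<phi> w \<times> free_colors \<phi> u \<subseteq> (C u w)\<inverse>" using product by blast
    ultimately show False
      using product_not_in_matching[OF _ free_colors_nonempty, of _ c] unfolding free_colors_def by simp
  qed
  ultimately have "\<phi> u \<in> free_colors \<phi> u" "\<phi> w \<in> free_colors \<phi> w"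
    unfolding free_colors_def
    using coloring_avoids_outer_forbidden coloring_avoids_v_forbidden coloring_uvw_in distinct
    by auto
  then have "(\<phi> u, \<phi> w) \<in> C u w" using product by blast
  then have "(\<phi> u, \<phi> w) \<in> completion u w"
    using \<sigma>_uw coloring_uvw_in distinct by (auto simp: completion_inside)
  then show False using coloring_edge edge_wu by (metis insert_commute)
qed

lemma recoloring_is_C_coloring:
  assumes "p \<in> free_colors \<phi> u" "q \<in> free_colors \<phi> w" "(p, q) \<notin> C u w"
  shows "C_coloring G C (pV G) (\<phi>(u := p, w := q))"
proof (rule C_coloring_update_two[OF plane corr])
  show "u \<noteq> w" using distinct by simp
  show "\<phi> a \<in> {1, 2, 3}" if "a \<in> pV G" for a using coloring_in that .
  show "p \<in> {1, 2, 3}" "q \<in> {1, 2, 3}" using assms(1,2) unfolding free_colors_def by blast+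
  show "(\<phi> a, \<phi> b) \<notin> C a b" if "{a, b} \<in> pE G" "a \<notin> {u, w}" "b \<notin> {u, w}" for a b
  proof -
    have "a \<noteq> b" using plane_graph_edge(1)[OF plane that(1)] .
    then have "completion a b = C a b" using that(2,3) by (intro completion_outside) blast
    then show ?thesis using coloring_edge[OF that(1)] by simp
  qed
  show "(\<phi> z, p) \<notin> C z u" if "{u, z} \<in> pE G" "z \<noteq> w" for z
    using assms(1) that plane_graph_edge(1)[OF plane that(1)]
    unfolding free_colors_def outer_forbidden_def v_forbidden_def by blast
  show "(\<phi> z, q) \<notin> C z w" if "{w, z} \<in> pE G" "z \<noteq> u" for z
    using assms(2) that plane_graph_edge(1)[OF plane that(1)]
    unfolding free_colors_def outer_forbidden_def v_forbidden_def by blast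
qed (rule assms(3))

end

lemma no_extension_completion:
  "\<not> (\<exists>\<phi>. C_coloring G completion (pV G) \<phi> \<and> (\<forall>x\<in>S. \<phi> x = phi0 x))"
proof
  assume "\<exists>\<phi>. C_coloring G completion (pV G) \<phi> \<and> (\<forall>x\<in>S. \<phi> x = phi0 x)"
  then obtain \<phi> where \<phi>: "C_coloring G completion (pV G) \<phi>" "\<forall>x\<in>S. \<phi> x = phi0 x" by blast
  then obtain p q where "p \<in> free_colors \<phi> u" "q \<in> free_colors \<phi> w" "(p, q) \<notin> C u w"
    using free_colors_product_not_in_C_uw by blast
  then have "C_coloring G C (pV G) (\<phi>(u := p, w := q))"
    using recoloring_is_C_coloring[OF \<phi>(1)] by blast
  moreover have "\<forall>x\<in>S. (\<phi>(u := p, w := q)) x = phi0 x"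
    using \<phi>(2) u_notin_S w_notin_S by auto
  ultimately show False using no_extension by blast
qed

lemma counterexample_completion: "counterexample G S completion phi0"
  using counterexample corr3_completion consistent_completion coloring_S_completion
    no_extension_completion
  unfolding counterexample_def consistent_on_triangles_def by blast

end

lemma minimal_counterexample_max_weight:
  assumes "minimal_counterexample G S C phi0" "counterexample G S C' phi0"
  shows "corr_weight G C' \<le> corr_weight G C"
  using assms(1)[unfolded minimal_counterexample_def, THEN conjunct2, rule_format, OF assms(2)]
  by simp

lemma face_edge_in_triangle:
  assumes "plane_graph G" "face_edges G F = {{u, v}, {v, w}, {w, u}}" "{x, y} \<in> face_edges G F"
  shows "x \<in> {u, v, w} \<and> y \<in> {u, v, w} \<and> x \<noteq> y"
proof -
  have "{x, y} \<in> pE G" using assms(3) unfolding face_edges_def by blast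
  then have "x \<noteq> y" by (rule plane_graph_edge(1)[OF assms(1)])
  moreover have "{x, y} = {u, v} \<or> {x, y} = {v, w} \<or> {x, y} = {w, u}"
    using assms(3) unfolding assms(2) by (simp only: insert_iff empty_iff simp_thms)
  then have "x \<in> {u, v, w} \<and> y \<in> {u, v, w}"
    by (elim disjE; simp add: doubleton_eq_iff; blast)
  ultimately show ?thesis by simp
qed

theorem mainTheorem6:
  fixes G :: pgraph and S :: "nat set" and C :: "nat \<Rightarrow> nat \<Rightarrow> (nat \<times> nat) set"
    and phi0 :: "nat \<Rightarrow> nat" and F :: "complex set" and u v w :: nat
  assumes "minimal_counterexample G S C phi0"
    and "is_face G F"
    and "distinct [u, v, w]"
    and "face_vertices G F = {u, v, w}"
    and "face_edges G F = {{u, v}, {v, w}, {w, u}}"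
    and "degree G u = 3" and "degree G w = 3"
    and "u \<notin> S" and "w \<notin> S"
  shows "\<forall>e\<in>face_edges G F. \<forall>x y. e = {x, y} \<longrightarrow> perfect_matching3 (C x y)"
proof (rule ccontr)
  assume "\<not> ?thesis"
  then obtain x y where xy: "{x, y} \<in> face_edges G F" "\<not> perfect_matching3 (C x y)" by blast
  have counterexample: "counterexample G S C phi0"
    using assms(1) unfolding minimal_counterexample_def by blast
  then have plane: "plane_graph G" and corr: "corr3 G C"
    and consistent: "consistent_on_triangles G C"
    unfolding counterexample_def consistent_on_triangles_def by blast+
  have edges: "{u, v} \<in> pE G" "{v, w} \<in> pE G" "{w, u} \<in> pE G"
    using assms(5) unfolding face_edges_def by blast+
  have xy_inside: "x \<in> {u, v, w}" "y \<in> {u, v, w}" "x \<noteq> y"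
    using face_edge_in_triangle[OF plane assms(5) xy(1)] by simp_all
  obtain \<sigma> :: "nat \<Rightarrow> nat \<Rightarrow> nat" where bij: "\<And>a. bij_betw (\<sigma> a) {1, 2, 3} {1, 2, 3}"
    and path: "\<And>p b q. (p, b) \<in> C u v \<Longrightarrow> (b, q) \<in> C v w \<Longrightarrow> \<sigma> u p = \<sigma> v b \<and> \<sigma> v b = \<sigma> w q"
    and uw: "\<And>p q. (p, q) \<in> C u w \<Longrightarrow> \<sigma> u p = \<sigma> w q"
    using triangle_potential[OF corr consistent assms(3) edges] by blast
  interpret triangle_completion G S C phi0 u v w \<sigma>
    by (rule triangle_completion.intro[OF counterexample assms(3) edges assms(6-9) _ path uw]) (rule bij)
  have "corr_weight G C < corr_weight G completion"
    by (rule corr_weight_less[OF xy_inside xy(2)])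
  moreover have "corr_weight G completion \<le> corr_weight G C"
    by (rule minimal_counterexample_max_weight[OF assms(1) counterexample_completion])
  ultimately show False by simp
qed

end
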